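(* The set of variables satisfying the KKT condition of the covariance selection problem is the set of all tuples $(\lambda ,S_k^\lambda ,F_k^\lambda ,P_k^\lambda )_{k = 0}^{N - 1}$ such that $\lambda>0$ and $C(\{ S_k^\lambda \} _{k = 0}^{N - 1} ) = \gamma$.
   Context: Consider the stochastic LTI system $x(k+1)=Ax(k)+Bu(k)+w(k)$ with $x(k)\in\mathbb R^n$, $u(k)\in\mathbb R^m$, $x(0)\sim\mathcal N(z,V)$, $w(k)\sim\mathcal N(0,W)$ mutually independent, and linear feedback $u(k)=F_kx(k)$, $k\in\{0,\dots,N-1\}$. With $S_k=\mathbb E([x(k);u(k)][x(k);u(k)]^T)$, the covariance selection problem is: minimize $J_p(\{S_k\})=\mathrm{Tr}\big(Q_f([A\ B]S_{N-1}[A\ B]^T+W)\big)+\sum_{k=0}^{N-1}\mathrm{Tr}(\mathrm{diag}(Q_k,R_k)S_k)$ over $\{S_k,F_k\}$ subject to $S_k=\Phi(F_k,S_{k-1})$ ($k=1,\dots,N-1$), $S_0=[I_n;F_0](V+zz^T)[I_n;F_0]^T$, and $C(\{S_k\})\le\gamma$, where $C(\{S_k\})=\mathrm{Tr}\big(\tilde Q_f([A\ B]S_{N-1}[A\ B]^T+W)\big)+\sum_{k=0}^{N-1}\mathrm{Tr}(\mathrm{diag}(\tilde Q_k,\tilde R_k)S_k)$ and $\Phi(F,S)=[I_n;F]([A\ B]S[A\ B]^T+W)[I_n;F]^T$. The KKT condition refers to the Lagrangian $L=J_p+\sum_{k=1}^{N-1}\mathrm{Tr}((\Phi(F_k,S_{k-1})-S_k)P_k)+\mathrm{Tr}(([I;F_0](V+zz^T)[I;F_0]^T-S_0)P_0)+\lambda(C(\{S_k\})-\gamma)$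 with multipliers $P_k\in\mathbb S^{n+m}$, $\lambda\ge0$: primal feasibility, complementary slackness $\lambda(C(\{S_k\})-\gamma)=0$, dual feasibility $\lambda\ge0$, and stationarity of $L$ in $(S_k,F_k)$. Assumptions: $Q_f,\tilde Q_f,Q_k,\tilde Q_k\succeq0$, $R_k+\lambda\tilde R_k\succ0$ for all $k$, $\lambda>0$; $V\succ0$, $W\succ0$; strict feasibility of the constraint. For $\lambda\ge0$, $X_N^\lambda=Q_f+\lambda\tilde Q_f$, $X_k^\lambda=A^TX_{k+1}^\lambda A-A^TX_{k+1}^\lambda B(R_k+\lambda\tilde R_k+B^TX_{k+1}^\lambda B)^{-1}B^TX_{k+1}^\lambda A+Q_k+\lambda\tilde Q_k$, $F_k^\lambda=-(R_k+\lambda\tilde R_k+B^TX_{k+1}^\lambda B)^{-1}B^TX_{k+1}^\lambda A$, $S_0^\lambda=[I;F_0^\lambda](V+zz^T)[I;F_0^\lambda]^T$, $S_k^\lambda=\Phi(F_k^\lambda,S_{k-1}^\lambda)$, and $P_k^\lambda=\begin{bmatrix}Q_k+\lambda\tilde Q_k+A^TX_{k+1}^\lambda A & A^TX_{k+1}^\lambda B\\ B^TX_{k+1}^\lambda A & R_k+\lambda\tilde R_k+B^TX_{k+1}^\lambda B\end{bmatrix}$. It was shown that for each fixed $\lambda$, $(S_k^\lambda,F_k^\lambda,P_k^\lambda)$ uniquely satisfy primal feasibility equalities and stationarity. Nontrivial-scenario assumption: $C(\{S_k^0\})>\gamma$. *)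

theory Defs
  imports "HOL-Analysis.Analysis"
begin

text \<open>Matrices over real with finite index types: state dimension 'n, input dimension 'm,
  stacked dimension 'n + 'm (sum type, state indices Inl, input indices Inr).
  Time-indexed objects are sequences over nat; only indices k < N matter.\<close>

type_synonym 'a sqm = "real^'a^'a"

definition psd :: "real^'a^'a \<Rightarrow> bool" where
  "psd M \<longleftrightarrow> transpose M = M \<and> (\<forall>x. 0 \<le> x \<bullet> (M *v x))"

definition pd :: "real^'a^'a \<Rightarrow> bool" where
  "pd M \<longleftrightarrow> transpose M = M \<and> (\<forall>x. x \<noteq> 0 \<longrightarrow> 0 < x \<bullet> (M *v x))"

definition symm :: "real^'a^'a \<Rightarrow> bool" where
  "symm M \<longleftrightarrow> transpose M = M"

definition stackI :: "real^'n^'m \<Rightarrow> real^'n^('n + 'm)" where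
  "stackI F = (\<chi> i j. case i of Inl a \<Rightarrow> (mat 1 :: real^'n^'n) $ a $ j | Inr b \<Rightarrow> F $ b $ j)"

definition hcat :: "real^'n^'n \<Rightarrow> real^'m^'n \<Rightarrow> real^('n + 'm)^'n" where
  "hcat A B = (\<chi> i j. case j of Inl a \<Rightarrow> A $ i $ a | Inr b \<Rightarrow> B $ i $ b)"

definition blk :: "real^'n^'n \<Rightarrow> real^'m^'n \<Rightarrow> real^'n^'m \<Rightarrow> real^'m^'m \<Rightarrow> real^('n + 'm)^('n + 'm)" where
  "blk M11 M12 M21 M22 = (\<chi> i j. case i of
      Inl a \<Rightarrow> (case j of Inl b \<Rightarrow> M11 $ a $ b | Inr b \<Rightarrow> M12 $ a $ b)
    | Inr a \<Rightarrow> (case j of Inl b \<Rightarrow> M21 $ a $ b | Inr b \<Rightarrow> M22 $ a $ b))"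

definition bdiag :: "real^'n^'n \<Rightarrow> real^'m^'m \<Rightarrow> real^('n + 'm)^('n + 'm)" where
  "bdiag Q R = blk Q 0 0 R"

definition outer :: "real^'n \<Rightarrow> real^'n^'n" where
  "outer z = (\<chi> i j. z $ i * z $ j)"

record ('n, 'm) lqprob =
  sA :: "real^'n^'n"
  sB :: "real^'m^'n"
  sW :: "real^'n^'n"
  sV :: "real^'n^'n"
  sz :: "real^'n"
  hor :: nat
  cQf :: "real^'n^'n"
  cQ :: "nat \<Rightarrow> real^'n^'n"
  cR :: "nat \<Rightarrow> real^'m^'m"
  tQf :: "real^'n^'n"
  tQ :: "nat \<Rightarrow> real^'n^'n"
  tR :: "nat \<Rightarrow> real^'m^'m"

definition Phi :: "('n::finite, 'm::finite) lqprob \<Rightarrow> real^'n^'m \<Rightarrow> real^('n+'m)^('n+'m) \<Rightarrow> real^('n+'m)^('n+'m)" where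
  "Phi p F S = stackI F ** (hcat (sA p) (sB p) ** S ** transpose (hcat (sA p) (sB p)) + sW p) ** transpose (stackI F)"

definition S0of :: "('n::finite, 'm::finite) lqprob \<Rightarrow> real^'n^'m \<Rightarrow> real^('n+'m)^('n+'m)" where
  "S0of p F = stackI F ** (sV p + outer (sz p)) ** transpose (stackI F)"

definition qcost :: "('n::finite, 'm::finite) lqprob \<Rightarrow> real^'n^'n \<Rightarrow> (nat \<Rightarrow> real^'n^'n) \<Rightarrow> (nat \<Rightarrow> real^'m^'m)
     \<Rightarrow> (nat \<Rightarrow> real^('n+'m)^('n+'m)) \<Rightarrow> real" where
  "qcost p Qf Q R S =
     trace (Qf ** (hcat (sA p) (sB p) ** S (hor p - 1) ** transpose (hcat (sA p) (sB p)) + sW p))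
     + (\<Sum>k<hor p. trace (bdiag (Q k) (R k) ** S k))"

definition Jp :: "('n::finite, 'm::finite) lqprob \<Rightarrow> (nat \<Rightarrow> real^('n+'m)^('n+'m)) \<Rightarrow> real" where
  "Jp p S = qcost p (cQf p) (cQ p) (cR p) S"

definition Cc :: "('n::finite, 'm::finite) lqprob \<Rightarrow> (nat \<Rightarrow> real^('n+'m)^('n+'m)) \<Rightarrow> real" where
  "Cc p S = qcost p (tQf p) (tQ p) (tR p) S"

definition dyn_ok :: "('n::finite, 'm::finite) lqprob \<Rightarrow> (nat \<Rightarrow> real^('n+'m)^('n+'m)) \<Rightarrow> (nat \<Rightarrow> real^'n^'m) \<Rightarrow> bool" where
  "dyn_ok p S F \<longleftrightarrow> S 0 = S0of p (F 0) \<and> (\<forall>k. 1 \<le> k \<and> k < hor p \<longrightarrow> S k = Phi p (F k) (S (k - 1)))"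

definition Lag :: "('n::finite, 'm::finite) lqprob \<Rightarrow> real \<Rightarrow> (nat \<Rightarrow> real^('n+'m)^('n+'m)) \<Rightarrow> (nat \<Rightarrow> real^'n^'m)
     \<Rightarrow> (nat \<Rightarrow> real^('n+'m)^('n+'m)) \<Rightarrow> real \<Rightarrow> real" where
  "Lag p \<gamma> S F P lam = Jp p S
     + (\<Sum>k\<in>{1..<hor p}. trace ((Phi p (F k) (S (k - 1)) - S k) ** P k))
     + trace ((S0of p (F 0) - S 0) ** P 0)
     + lam * (Cc p S - \<gamma>)"

definition stationary :: "('n::finite, 'm::finite) lqprob \<Rightarrow> real \<Rightarrow> (nat \<Rightarrow> real^('n+'m)^('n+'m)) \<Rightarrow> (nat \<Rightarrow> real^'n^'m)
     \<Rightarrow> (nat \<Rightarrow> real^('n+'m)^('n+'m)) \<Rightarrow> real \<Rightarrow> bool" where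
  "stationary p \<gamma> S F P lam \<longleftrightarrow>
     (\<forall>k<hor p.
        ((\<lambda>X. Lag p \<gamma> (S(k := X)) F P lam) has_derivative (\<lambda>_. 0)) (at (S k) within {X. symm X})
      \<and> ((\<lambda>G. Lag p \<gamma> S (F(k := G)) P lam) has_derivative (\<lambda>_. 0)) (at (F k)))"

definition KKT :: "('n::finite, 'm::finite) lqprob \<Rightarrow> real \<Rightarrow> real \<Rightarrow> (nat \<Rightarrow> real^('n+'m)^('n+'m)) \<Rightarrow> (nat \<Rightarrow> real^'n^'m)
     \<Rightarrow> (nat \<Rightarrow> real^('n+'m)^('n+'m)) \<Rightarrow> bool" where
  "KKT p \<gamma> lam S F P \<longleftrightarrow>
     (\<forall>k<hor p. symm (P k))
   \<and> dyn_ok p S F \<and> Cc p S \<le> \<gamma>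
   \<and> lam * (Cc p S - \<gamma>) = 0
   \<and> 0 \<le> lam
   \<and> stationary p \<gamma> S F P lam"

text \<open>Riccati recursion, indexed backwards: Xb j = X_{N-j}.\<close>
fun Xb :: "('n::finite, 'm::finite) lqprob \<Rightarrow> real \<Rightarrow> nat \<Rightarrow> real^'n^'n" where
  "Xb p lam 0 = cQf p + lam *\<^sub>R tQf p"
| "Xb p lam (Suc j) = (let k = hor p - Suc j; X = Xb p lam j; A = sA p; B = sB p in
     transpose A ** X ** A
     - transpose A ** X ** B ** matrix_inv (cR p k + lam *\<^sub>R tR p k + transpose B ** X ** B) ** transpose B ** X ** A
     + cQ p k + lam *\<^sub>R tQ p k)"

definition Xlam :: "('n::finite, 'm::finite) lqprob \<Rightarrow> real \<Rightarrow> nat \<Rightarrow> real^'n^'n" where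
  "Xlam p lam k = Xb p lam (hor p - k)"

definition Flam :: "('n::finite, 'm::finite) lqprob \<Rightarrow> real \<Rightarrow> nat \<Rightarrow> real^'n^'m" where
  "Flam p lam k = (let X = Xlam p lam (Suc k); A = sA p; B = sB p in
     - (matrix_inv (cR p k + lam *\<^sub>R tR p k + transpose B ** X ** B) ** transpose B ** X ** A))"

fun Slam :: "('n::finite, 'm::finite) lqprob \<Rightarrow> real \<Rightarrow> nat \<Rightarrow> real^('n+'m)^('n+'m)" where
  "Slam p lam 0 = S0of p (Flam p lam 0)"
| "Slam p lam (Suc k) = Phi p (Flam p lam (Suc k)) (Slam p lam k)"

definition Plam :: "('n::finite, 'm::finite) lqprob \<Rightarrow> real \<Rightarrow> nat \<Rightarrow> real^('n+'m)^('n+'m)" where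
  "Plam p lam k = (let X = Xlam p lam (Suc k); A = sA p; B = sB p in
     blk (cQ p k + lam *\<^sub>R tQ p k + transpose A ** X ** A) (transpose A ** X ** B)
         (transpose B ** X ** A) (cR p k + lam *\<^sub>R tR p k + transpose B ** X ** B))"

end

theory Submission
  imports Defs
begin

text \<open>For fixed \<open>\<lambda>\<close> the Lagrangian is affine in each \<open>S_k\<close>, with gradient
  \<open>diag(Q_k + \<lambda> tQ_k, R_k + \<lambda> tR_k) + [A B]^T Y [A B] - P_k\<close>, where \<open>Y\<close> is the weighted
  terminal cost \<open>Q_f + \<lambda> tQ_f\<close> at the last stage and \<open>[I; F_(k+1)]^T P_(k+1) [I; F_(k+1)]\<close> otherwise.
  In \<open>F_k\<close> it is quadratic with the positive definite second moment of \<open>x(k)\<close> as Hessian factor,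
  so it is stationary in \<open>F_k\<close> iff \<open>[0 I] P_k [I; F_k] = 0\<close>. Going backwards from \<open>k = N - 1\<close>,
  stationarity therefore forces \<open>P_k = P_k^\<lambda>\<close> and \<open>F_k = F_k^\<lambda>\<close>: completing the square
  shows \<open>[I; F_k^\<lambda>]^T P_k^\<lambda> [I; F_k^\<lambda>] = X_k^\<lambda>\<close>, which is what the next step back needs.
  The dynamics then force \<open>S_k = S_k^\<lambda>\<close>, and complementary slackness together with
  \<open>C(S^0) > \<gamma>\<close> rules out \<open>\<lambda> = 0\<close>.\<close>

section \<open>Matrix algebra\<close>

lemma matrix_add_rdistrib: "((A::'a::semiring_1^'n^'m) + B) ** (C::'a^'p^'n) = A ** C + B ** C"
  by (simp add: matrix_matrix_mult_def vec_eq_iff sum.distrib distrib_right)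

lemma matrix_diff_rdistrib: "((A::'a::ring_1^'n^'m) - B) ** (C::'a^'p^'n) = A ** C - B ** C"
  by (simp add: matrix_matrix_mult_def vec_eq_iff sum_subtractf left_diff_distrib)

lemma matrix_diff_ldistrib: "(A::'a::ring_1^'n^'m) ** ((B::'a^'p^'n) - C) = A ** B - A ** C"
  by (simp add: matrix_matrix_mult_def vec_eq_iff sum_subtractf right_diff_distrib)

lemma matrix_uminus_left: "(- (A::'a::ring_1^'n^'m)) ** (B::'a^'p^'n) = - (A ** B)"
  by (simp add: matrix_matrix_mult_def vec_eq_iff sum_negf)

lemma matrix_uminus_right: "(A::'a::ring_1^'n^'m) ** (- (B::'a^'p^'n)) = - (A ** B)"
  by (simp add: matrix_matrix_mult_def vec_eq_iff sum_negf)

lemma transpose_add: "transpose ((A::'a::plus^'n^'m) + B) = transpose A + transpose B"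
  by (simp add: transpose_def vec_eq_iff)

lemma transpose_diff: "transpose ((A::'a::minus^'n^'m) - B) = transpose A - transpose B"
  by (simp add: transpose_def vec_eq_iff)

lemma transpose_uminus: "transpose (- (A::'a::uminus^'n^'m)) = - transpose A"
  by (simp add: transpose_def vec_eq_iff)

lemma transpose_zero [simp]: "transpose (0::'a::zero^'n^'m) = 0"
  by (simp add: transpose_def vec_eq_iff)

lemma trace_zero [simp]: "trace (0::'a::semiring_1^'n^'n) = 0"
  by (simp add: trace_def)

lemma trace_transpose: "trace (transpose (A::'a::semiring_1^'n^'n)) = trace A"
  by (simp add: trace_def transpose_def)

lemma trace_scaleR: "trace (c *\<^sub>R (A::real^'n^'n)) = c * trace A"
  by (simp add: trace_def sum_distrib_left)

lemma trace_scaleR_mult: "trace ((c *\<^sub>R A) ** (B::real^'n^'m)) = c * trace (A ** B)"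
  by (simp add: scalar_matrix_assoc[symmetric] trace_scaleR)

lemma trace_transpose_mult_self:
  "trace (transpose (K::real^'n^'m) ** K) = (\<Sum>i\<in>UNIV. \<Sum>j\<in>UNIV. (K$j$i)\<^sup>2)"
  by (simp add: trace_def matrix_matrix_mult_def transpose_def power2_eq_square)

lemma trace_transpose_mult_self_eq_0:
  assumes "trace (transpose (K::real^'n^'m) ** K) = 0"
  shows "K = 0"
proof -
  have "\<forall>i. (\<Sum>j\<in>UNIV. (K$j$i)\<^sup>2) = 0"
    using assms unfolding trace_transpose_mult_self
    by (subst (asm) sum_nonneg_eq_0_iff) (auto intro: sum_nonneg)
  then have "\<forall>i j. (K$j$i)\<^sup>2 = 0"
    by (simp add: sum_nonneg_eq_0_iff)
  then show ?thesis by (simp add: vec_eq_iff)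
qed

lemma trace_mult_orthogonal_eq_0:
  assumes "\<And>H::real^'m^'n. trace (H ** (K::real^'n^'m)) = 0"
  shows "K = 0"
  using assms[of "transpose K"] trace_transpose_mult_self_eq_0 by blast

lemma trace_congruence:
  "trace ((C::'a::comm_semiring_1^'n^'m) ** (D::'a^'n^'n) ** transpose C ** (Y::'a^'m^'m))
   = trace ((transpose C ** Y ** C) ** D)"
proof -
  have "trace (C ** D ** transpose C ** Y) = trace (C ** (D ** transpose C ** Y))"
    by (simp add: matrix_mul_assoc)
  also have "\<dots> = trace ((D ** transpose C ** Y) ** C)" by (rule trace_mul_sym)
  also have "\<dots> = trace (D ** (transpose C ** Y ** C))" by (simp add: matrix_mul_assoc)
  also have "\<dots> = trace ((transpose C ** Y ** C) ** D)" by (rule trace_mul_sym)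
  finally show ?thesis .
qed

lemma trace_congruence_diff:
  "trace ((C::'a::comm_ring_1^'n^'m) ** X ** transpose C ** Y) - trace (C ** Z ** transpose C ** Y)
   = trace ((transpose C ** Y ** C) ** (X - Z))"
proof -
  have "C ** X ** transpose C ** Y - C ** Z ** transpose C ** Y = C ** (X - Z) ** transpose C ** Y"
    by (simp add: matrix_diff_ldistrib matrix_diff_rdistrib)
  then show ?thesis by (metis trace_sub trace_congruence)
qed

lemma trace_congruence_scaleR:
  "trace ((t *\<^sub>R H) ** M ** transpose (t *\<^sub>R H) ** (R::real^'m^'m)) = t * t * trace (H ** M ** transpose H ** R)"
  for H :: "real^'n^'m" and M :: "real^'n^'n"
  by (simp add: scalar_matrix_assoc[symmetric] matrix_scalar_ac transpose_scalar trace_scaleR)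

lemma matrix_inv_right: "invertible (A::'a::semiring_1^'n^'n) \<Longrightarrow> A ** matrix_inv A = mat 1"
  and matrix_inv_left: "invertible (A::'a::semiring_1^'n^'n) \<Longrightarrow> matrix_inv A ** A = mat 1"
  unfolding invertible_def matrix_inv_def by (metis (mono_tags, lifting) someI_ex)+

lemma transpose_matrix_inv_symmetric:
  assumes "invertible (A::'a::comm_semiring_1^'n^'n)" and "transpose A = A"
  shows "transpose (matrix_inv A) = matrix_inv A"
proof -
  have "transpose (matrix_inv A) ** A = mat 1"
    by (metis assms matrix_inv_right matrix_transpose_mul transpose_mat)
  then have "transpose (matrix_inv A) = transpose (matrix_inv A) ** (A ** matrix_inv A)"
    by (simp add: matrix_inv_right[OF assms(1)])
  also have "\<dots> = matrix_inv A"
    by (simp add: matrix_mul_assoc \<open>transpose (matrix_inv A) ** A = mat 1\<close>)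
  finally show ?thesis .
qed

lemma matrix_mult_invertible_eq_0_iff:
  assumes "invertible (M::'a::comm_semiring_1^'n^'n)"
  shows "Z ** M = 0 \<longleftrightarrow> Z = 0"
proof
  assume "Z ** M = 0"
  then have "Z ** M ** matrix_inv M = 0" by simp
  then show "Z = 0" by (simp add: matrix_mul_assoc[symmetric] matrix_inv_right[OF assms])
qed simp

lemma psd_congruence:
  assumes "psd (X::real^'m^'m)"
  shows "psd (transpose (C::real^'n^'m) ** X ** C)"
proof -
  have "x \<bullet> ((transpose C ** X ** C) *v x) = (C *v x) \<bullet> (X *v (C *v x))" for x
    by (metis dot_lmul_matrix inner_commute matrix_vector_mul_assoc transpose_matrix_vector)
  then show ?thesis
    using assms unfolding psd_def by (auto simp: matrix_transpose_mul matrix_mul_assoc)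
qed

lemma psd_add: "psd A \<Longrightarrow> psd B \<Longrightarrow> psd ((A::real^'n^'n) + B)"
  unfolding psd_def
  by (auto simp: transpose_add matrix_vector_mult_add_rdistrib inner_add_right)

lemma pd_add_psd: "pd A \<Longrightarrow> psd B \<Longrightarrow> pd ((A::real^'n^'n) + B)"
  unfolding psd_def pd_def
  by (auto simp: transpose_add matrix_vector_mult_add_rdistrib inner_add_right add_pos_nonneg)

lemma pd_imp_psd: "pd A \<Longrightarrow> psd A"
  unfolding psd_def pd_def by (metis order.refl inner_zero_left less_imp_le)

lemma psd_scaleR: "psd A \<Longrightarrow> 0 \<le> c \<Longrightarrow> psd (c *\<^sub>R (A::real^'n^'n))"
  unfolding psd_def by (simp add: transpose_scalar scaleR_matrix_vector_assoc[symmetric])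

lemma pd_imp_invertible: "pd (A::real^'n^'n) \<Longrightarrow> invertible A"
  unfolding pd_def
  by (metis inner_zero_right invertible_left_inverse less_irrefl matrix_left_invertible_ker)

lemma psd_outer: "psd (outer (z::real^'n))"
proof -
  have "x \<bullet> (outer z *v x) = (z \<bullet> x)\<^sup>2" for x
    by (simp add: outer_def inner_vec_def matrix_vector_mult_def power2_eq_square
        sum_distrib_left sum_distrib_right mult_ac)
  then show ?thesis
    unfolding psd_def by (simp add: outer_def transpose_def vec_eq_iff mult.commute)
qed

definition inl_mat :: "real^'n::finite^('n + 'm::finite)" where
  "inl_mat = (\<chi> i j. case i of Inl a \<Rightarrow> (if a = j then 1 else 0) | Inr b \<Rightarrow> 0)"

definition inr_mat :: "real^'m::finite^('n::finite + 'm)" where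
  "inr_mat = (\<chi> i j. case i of Inl a \<Rightarrow> 0 | Inr b \<Rightarrow> (if b = j then 1 else 0))"

lemma sum_UNIV_sum:
  "(\<Sum>i\<in>(UNIV::('a::finite + 'b::finite) set). f i) = (\<Sum>a\<in>UNIV. f (Inl a)) + (\<Sum>b\<in>UNIV. f (Inr b))"
  by (subst UNIV_Plus_UNIV[symmetric], subst sum.Plus) auto

lemma stackI_eq: "stackI (F::real^'n::finite^'m::finite) = inl_mat + inr_mat ** F"
  by (auto simp: vec_eq_iff stackI_def inl_mat_def inr_mat_def matrix_matrix_mult_def mat_def
      sum_UNIV_sum if_distrib if_distribR cong: if_cong split: sum.split)

lemma blk_inl_inl: "transpose inl_mat ** blk a b c d ** inl_mat = a"
  and blk_inl_inr: "transpose inl_mat ** blk a b c d ** inr_mat = b"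
  and blk_inr_inl: "transpose inr_mat ** blk a b c d ** inl_mat = c"
  and blk_inr_inr: "transpose inr_mat ** blk a b c d ** inr_mat = d"
  for a :: "real^'n::finite^'n" and d :: "real^'m::finite^'m"
  by (auto simp: vec_eq_iff inl_mat_def inr_mat_def blk_def matrix_matrix_mult_def transpose_def
      sum_UNIV_sum if_distrib if_distribR cong: if_cong)

lemma transpose_hcat_congruence:
  "transpose (hcat A B) ** X ** hcat A B =
   blk (transpose A ** X ** A) (transpose A ** X ** B) (transpose B ** X ** A) (transpose B ** X ** B)"
  by (auto simp: vec_eq_iff hcat_def blk_def matrix_matrix_mult_def transpose_def split: sum.split)

lemma bdiag_add_blk: "bdiag Q R + blk a b c d = blk (Q + a) b c (R + d)"
  by (auto simp: vec_eq_iff bdiag_def blk_def split: sum.split)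

lemma bdiag_add: "bdiag (Q1 + Q2) (R1 + R2) = bdiag Q1 R1 + bdiag Q2 R2"
  by (auto simp: vec_eq_iff bdiag_def blk_def split: sum.split)

lemma bdiag_scaleR: "bdiag (c *\<^sub>R Q) (c *\<^sub>R R) = c *\<^sub>R bdiag Q R"
  by (auto simp: vec_eq_iff bdiag_def blk_def split: sum.split)

lemma bdiag_eq:
  "bdiag (Q::real^'n::finite^'n) (R::real^'m::finite^'m) =
   inl_mat ** Q ** transpose inl_mat + inr_mat ** R ** transpose inr_mat"
  by (auto simp: vec_eq_iff bdiag_def blk_def inl_mat_def inr_mat_def matrix_matrix_mult_def
      transpose_def sum_UNIV_sum if_distrib if_distribR cong: if_cong split: sum.split)

lemma psd_bdiag: "psd Q \<Longrightarrow> psd R \<Longrightarrow> psd (bdiag Q R)"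
  unfolding bdiag_eq
  using psd_congruence[of Q "transpose inl_mat"] psd_congruence[of R "transpose inr_mat"]
  by (intro psd_add) auto

lemma stackI_congruence:
  fixes P :: "real^('n::finite + 'm::finite)^('n + 'm)" and F :: "real^'n^'m"
  shows "transpose (stackI F) ** P ** stackI F =
    transpose inl_mat ** P ** inl_mat + transpose inl_mat ** P ** inr_mat ** F
    + transpose F ** (transpose inr_mat ** P ** inl_mat)
    + transpose F ** (transpose inr_mat ** P ** inr_mat) ** F"
  by (simp add: stackI_eq transpose_add matrix_transpose_mul matrix_add_ldistrib
      matrix_add_rdistrib matrix_mul_assoc add_ac)

text \<open>Completing the square: for the optimal gain, \<open>[I; F]^T P [I; F]\<close> is the Schur complement
  of the input block of \<open>P\<close>.\<close>

lemma stackI_congruence_optimal_gain: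
  fixes P :: "real^('n::finite + 'm::finite)^('n + 'm)"
  assumes sym: "transpose P = P" and inv: "invertible (transpose inr_mat ** P ** inr_mat)"
  defines "F \<equiv> - (matrix_inv (transpose inr_mat ** P ** inr_mat) ** (transpose inr_mat ** P ** inl_mat))"
  shows "transpose (stackI F) ** P ** stackI F =
    transpose inl_mat ** P ** inl_mat
    - transpose inl_mat ** P ** inr_mat ** matrix_inv (transpose inr_mat ** P ** inr_mat)
      ** (transpose inr_mat ** P ** inl_mat)"
proof -
  define P21 where "P21 = transpose inr_mat ** P ** inl_mat"
  define P12 where "P12 = transpose inl_mat ** P ** inr_mat"
  define P22 where "P22 = transpose inr_mat ** P ** inr_mat"
  define P22i where "P22i = matrix_inv P22"
  have "transpose P22 = P22"
    unfolding P22_def by (simp add: matrix_transpose_mul sym matrix_mul_assoc)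
  then have "transpose P22i = P22i"
    using transpose_matrix_inv_symmetric inv unfolding P22i_def P22_def by blast
  moreover have "transpose P21 = P12"
    unfolding P21_def P12_def by (simp add: matrix_transpose_mul sym matrix_mul_assoc)
  ultimately have tF: "transpose F = - (P12 ** P22i)"
    by (simp add: F_def P21_def P22_def P22i_def transpose_uminus matrix_transpose_mul)
  have FP: "F = - (P22i ** P21)"
    by (simp add: F_def P21_def P22_def P22i_def)
  have "transpose F ** P22 ** F = P12 ** (P22i ** P22) ** P22i ** P21"
    unfolding tF by (simp add: FP matrix_uminus_left matrix_uminus_right matrix_mul_assoc)
  also have "P22i ** P22 = mat 1"
    unfolding P22i_def P22_def using matrix_inv_left[OF inv] .
  finally have "transpose F ** P22 ** F = P12 ** P22i ** P21" by simp
  then show ?thesis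
    unfolding stackI_congruence P12_def[symmetric] P21_def[symmetric] P22_def[symmetric]
      P22i_def[symmetric] tF
    by (simp add: F_def P21_def P22_def P22i_def matrix_uminus_left matrix_uminus_right
        matrix_mul_assoc)
qed

lemma inr_stackI_eq_0_iff:
  fixes P :: "real^('n::finite + 'm::finite)^('n + 'm)"
  assumes inv: "invertible (transpose inr_mat ** P ** inr_mat)"
  shows "transpose inr_mat ** P ** stackI F = 0 \<longleftrightarrow>
    F = - (matrix_inv (transpose inr_mat ** P ** inr_mat) ** (transpose inr_mat ** P ** inl_mat))"
proof -
  define P21 where "P21 = transpose inr_mat ** P ** inl_mat"
  define P22 where "P22 = transpose inr_mat ** P ** inr_mat"
  have "transpose inr_mat ** P ** stackI F = P21 + P22 ** F"
    unfolding stackI_eq P21_def P22_def by (simp add: matrix_add_ldistrib matrix_mul_assoc)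
  also have "\<dots> = 0 \<longleftrightarrow> matrix_inv P22 ** P21 + F = 0"
  proof
    assume "P21 + P22 ** F = 0"
    then have "matrix_inv P22 ** (P21 + P22 ** F) = 0" by simp
    then show "matrix_inv P22 ** P21 + F = 0"
      using matrix_inv_left[OF inv]
      by (simp add: matrix_add_ldistrib matrix_mul_assoc P22_def)
  next
    assume "matrix_inv P22 ** P21 + F = 0"
    then have "P22 ** (matrix_inv P22 ** P21 + F) = 0" by simp
    then show "P21 + P22 ** F = 0"
      using matrix_inv_right[OF inv]
      by (simp add: matrix_add_ldistrib matrix_mul_assoc P22_def)
  qed
  finally show ?thesis
    unfolding P21_def P22_def by (simp add: eq_neg_iff_add_eq_0 add.commute)
qed

section \<open>The Riccati recursion\<close>

abbreviation sAB :: "('n::finite, 'm::finite) lqprob \<Rightarrow> real^('n + 'm)^'n" where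
  "sAB p \<equiv> hcat (sA p) (sB p)"

definition weights_admissible :: "('n::finite, 'm::finite) lqprob \<Rightarrow> bool" where
  "weights_admissible p \<longleftrightarrow> psd (cQf p) \<and> psd (tQf p)
     \<and> (\<forall>k<hor p. psd (cQ p k)) \<and> (\<forall>k<hor p. psd (tQ p k))
     \<and> (\<forall>lam\<ge>0. \<forall>k<hor p. pd (cR p k + lam *\<^sub>R tR p k))"

lemma Plam_eq:
  "Plam p lam k = bdiag (cQ p k + lam *\<^sub>R tQ p k) (cR p k + lam *\<^sub>R tR p k)
     + transpose (sAB p) ** Xlam p lam (Suc k) ** sAB p"
  unfolding Plam_def Let_def transpose_hcat_congruence bdiag_add_blk ..

lemma Plam_inl_inl:
    "transpose inl_mat ** Plam p lam k ** inl_mat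
     = cQ p k + lam *\<^sub>R tQ p k + transpose (sA p) ** Xlam p lam (Suc k) ** sA p"
  and Plam_inl_inr:
    "transpose inl_mat ** Plam p lam k ** inr_mat = transpose (sA p) ** Xlam p lam (Suc k) ** sB p"
  and Plam_inr_inl:
    "transpose inr_mat ** Plam p lam k ** inl_mat = transpose (sB p) ** Xlam p lam (Suc k) ** sA p"
  and Plam_inr_inr:
    "transpose inr_mat ** Plam p lam k ** inr_mat
     = cR p k + lam *\<^sub>R tR p k + transpose (sB p) ** Xlam p lam (Suc k) ** sB p"
  unfolding Plam_def Let_def blk_inl_inl blk_inl_inr blk_inr_inl blk_inr_inr by (rule refl)+

lemma Flam_eq_optimal_gain:
  "Flam p lam k = - (matrix_inv (transpose inr_mat ** Plam p lam k ** inr_mat)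
                     ** (transpose inr_mat ** Plam p lam k ** inl_mat))"
  unfolding Plam_inr_inr Plam_inr_inl Flam_def Let_def by (simp add: matrix_mul_assoc)

lemma Xlam_Suc:
  assumes "k < hor p"
  shows "Xlam p lam k =
     transpose (sA p) ** Xlam p lam (Suc k) ** sA p
     - transpose (sA p) ** Xlam p lam (Suc k) ** sB p
       ** matrix_inv (cR p k + lam *\<^sub>R tR p k + transpose (sB p) ** Xlam p lam (Suc k) ** sB p)
       ** transpose (sB p) ** Xlam p lam (Suc k) ** sA p
     + cQ p k + lam *\<^sub>R tQ p k"
proof -
  have "hor p - k = Suc (hor p - Suc k)" and "hor p - Suc (hor p - Suc k) = k"
    using assms by simp_all
  then show ?thesis unfolding Xlam_def by (simp add: Let_def)
qed

lemma Plam_psd_invertible_if_psd_Xlam: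
  assumes adm: "weights_admissible p" and "0 \<le> lam" and "k < hor p"
    and X: "psd (Xlam p lam (Suc k))"
  shows "psd (Plam p lam k)" and "invertible (transpose inr_mat ** Plam p lam k ** inr_mat)"
proof -
  have R: "pd (cR p k + lam *\<^sub>R tR p k)" and Q: "psd (cQ p k + lam *\<^sub>R tQ p k)"
    using assms by (auto simp: weights_admissible_def intro!: psd_add psd_scaleR)
  show "psd (Plam p lam k)"
    unfolding Plam_eq by (intro psd_add psd_bdiag Q pd_imp_psd R psd_congruence X)
  show "invertible (transpose inr_mat ** Plam p lam k ** inr_mat)"
    unfolding Plam_inr_inr by (intro pd_imp_invertible pd_add_psd R psd_congruence X)
qed

lemma Xlam_eq_stackI_congruence:
  assumes "weights_admissible p" and "0 \<le> lam" and k: "k < hor p"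
    and "psd (Xlam p lam (Suc k))"
  shows "Xlam p lam k = transpose (stackI (Flam p lam k)) ** Plam p lam k ** stackI (Flam p lam k)"
proof -
  note P = Plam_psd_invertible_if_psd_Xlam[OF assms]
  have "transpose (Plam p lam k) = Plam p lam k"
    using P(1) by (simp add: psd_def)
  from stackI_congruence_optimal_gain[OF this P(2)] show ?thesis
    unfolding Flam_eq_optimal_gain[symmetric] Xlam_Suc[OF k]
    unfolding Plam_inl_inl Plam_inl_inr Plam_inr_inl Plam_inr_inr
    by (simp add: matrix_mul_assoc algebra_simps)
qed

lemma psd_Xlam:
  assumes adm: "weights_admissible p" and lam: "0 \<le> lam" and "k \<le> hor p"
  shows "psd (Xlam p lam k)"
  using \<open>k \<le> hor p\<close>
proof (induction k rule: inc_induct)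
  case base
  then show ?case using adm lam by (simp add: Xlam_def weights_admissible_def psd_add psd_scaleR)
next
  case (step k)
  show ?case
    unfolding Xlam_eq_stackI_congruence[OF adm lam step(2) step(3)]
    by (intro psd_congruence Plam_psd_invertible_if_psd_Xlam[OF adm lam step(2) step(3)])
qed

lemma psd_Plam: "weights_admissible p \<Longrightarrow> 0 \<le> lam \<Longrightarrow> k < hor p \<Longrightarrow> psd (Plam p lam k)"
  and invertible_Plam_inr_inr: "weights_admissible p \<Longrightarrow> 0 \<le> lam \<Longrightarrow> k < hor p \<Longrightarrow>
    invertible (transpose inr_mat ** Plam p lam k ** inr_mat)"
  by (simp_all add: Plam_psd_invertible_if_psd_Xlam psd_Xlam)

lemma has_derivative_zero_imp_line_coeff_zero:
  fixes f :: "'a::real_normed_vector \<Rightarrow> real"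
  assumes d: "(f has_derivative (\<lambda>_. 0)) (at x within T)"
    and line: "\<And>t. x + t *\<^sub>R h \<in> T"
    and quad: "\<And>t. f (x + t *\<^sub>R h) = f x + t * a + t * t * c"
  shows "a = 0"
proof -
  define g where "g t = x + t *\<^sub>R h" for t :: real
  have "(g has_derivative (\<lambda>t. t *\<^sub>R h)) (at 0)"
    unfolding g_def by (auto intro!: derivative_eq_intros)
  moreover have "(f has_derivative (\<lambda>_. 0)) (at (g 0) within range g)"
    using has_derivative_subset[OF d, of "range g"] line by (auto simp: g_def)
  ultimately have "((f \<circ> g) has_derivative (\<lambda>_. 0)) (at 0)"
    using diff_chain_within by fastforce
  moreover have "f \<circ> g = (\<lambda>t. f x + t * a + t * t * c)"
    by (auto simp: g_def quad)
  moreover have "(\<lambda>_::real. 0::real) = (*) 0"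
    by auto
  ultimately have "((\<lambda>t. f x + t * a + t * t * c) has_real_derivative 0) (at 0)"
    by (simp add: has_field_derivative_def)
  moreover have "((\<lambda>t. f x + t * a + t * t * c) has_real_derivative a) (at 0)"
    by (auto intro!: derivative_eq_intros)
  ultimately show "a = 0"
    using DERIV_unique by blast
qed

lemma has_derivative_zero_if_bilinear_remainder:
  fixes f :: "'a::euclidean_space \<Rightarrow> real"
  assumes "bilinear b" and "\<And>y. f y = f x + b (y - x) (y - x)"
  shows "(f has_derivative (\<lambda>_. 0)) (at x within T)"
proof -
  have bb: "bounded_bilinear b"
    using assms(1) bilinear_conv_bounded_bilinear by blast
  have "((\<lambda>y. y - x) has_derivative (\<lambda>h. h)) (at x within T)"
    by (auto intro!: derivative_eq_intros)
  from bounded_bilinear.FDERIV[OF bb this this]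
  have "((\<lambda>y. f x + b (y - x) (y - x)) has_derivative (\<lambda>_. 0)) (at x within T)"
    using bounded_bilinear.zero_left[OF bb] bounded_bilinear.zero_right[OF bb]
    by (auto intro!: derivative_eq_intros)
  moreover have "f = (\<lambda>y. f x + b (y - x) (y - x))"
    using assms(2) by blast
  ultimately show ?thesis by simp
qed

section \<open>First variations of the Lagrangian\<close>

lemma sum_fun_upd:
  fixes g :: "'a \<Rightarrow> 'b \<Rightarrow> 'c::ab_group_add"
  assumes "finite A"
  shows "(\<Sum>j\<in>A. g j ((F(k := G)) j)) = (\<Sum>j\<in>A. g j (F j)) + (if k \<in> A then g k G - g k (F k) else 0)"
proof (cases "k \<in> A")
  case True
  have "(\<Sum>j\<in>A - {k}. g j ((F(k := G)) j)) = (\<Sum>j\<in>A - {k}. g j (F j))"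
    by (rule sum.cong) auto
  then show ?thesis
    using True assms by (simp add: sum.remove)
next
  case False
  then show ?thesis by (auto intro: sum.cong)
qed

text \<open>The second moment \<open>E(x(k) x(k)^T)\<close>; with it the dynamics read
  \<open>S_k = [I; F_k] E(x(k) x(k)^T) [I; F_k]^T\<close> uniformly in \<open>k\<close>, including \<open>k = 0\<close>.\<close>

definition state_moment ::
    "('n::finite, 'm::finite) lqprob \<Rightarrow> (nat \<Rightarrow> real^('n + 'm)^('n + 'm)) \<Rightarrow> nat \<Rightarrow> real^'n^'n" where
  "state_moment p S k =
     (if k = 0 then sV p + outer (sz p) else sAB p ** S (k - 1) ** transpose (sAB p) + sW p)"

lemma state_moment_fun_upd:
  "state_moment p (S(k := X)) = (state_moment p S)(Suc k := sAB p ** X ** transpose (sAB p) + sW p)"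
  by (auto simp: fun_eq_iff state_moment_def)

definition constraint_sum ::
    "('n::finite, 'm::finite) lqprob \<Rightarrow> (nat \<Rightarrow> real^('n + 'm)^('n + 'm)) \<Rightarrow> (nat \<Rightarrow> real^'n^'m)
     \<Rightarrow> (nat \<Rightarrow> real^('n + 'm)^('n + 'm)) \<Rightarrow> real" where
  "constraint_sum p S F P =
     (\<Sum>k<hor p. trace ((stackI (F k) ** state_moment p S k ** transpose (stackI (F k)) - S k) ** P k))"

lemma Lag_eq_constraint_sum:
  assumes "1 \<le> hor p"
  shows "Lag p \<gamma> S F P lam = Jp p S + lam * (Cc p S - \<gamma>) + constraint_sum p S F P"
proof -
  have "{..<hor p} = insert 0 {1..<hor p}"
    using assms by auto
  moreover have "state_moment p S k = sAB p ** S (k - 1) ** transpose (sAB p) + sW p"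
    if "k \<in> {1..<hor p}" for k
    using that by (simp add: state_moment_def)
  ultimately show ?thesis
    unfolding Lag_def Phi_def S0of_def constraint_sum_def
    by (simp add: state_moment_def matrix_mul_assoc)
qed

lemma qcost_fun_upd:
  assumes "k < hor p"
  shows "qcost p Qf Q R (S(k := X)) = qcost p Qf Q R S
     + (if k = hor p - 1 then trace ((transpose (sAB p) ** Qf ** sAB p) ** (X - S k)) else 0)
     + trace (bdiag (Q k) (R k) ** (X - S k))"
proof -
  have "trace (Qf ** (sAB p ** X ** transpose (sAB p) + sW p))
      - trace (Qf ** (sAB p ** S k ** transpose (sAB p) + sW p))
      = trace (sAB p ** X ** transpose (sAB p) ** Qf) - trace (sAB p ** S k ** transpose (sAB p) ** Qf)"
    by (simp add: matrix_add_ldistrib trace_add trace_mul_sym[of Qf])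
  then have "trace (Qf ** (sAB p ** X ** transpose (sAB p) + sW p))
      = trace (Qf ** (sAB p ** S k ** transpose (sAB p) + sW p))
        + trace ((transpose (sAB p) ** Qf ** sAB p) ** (X - S k))"
    by (simp add: trace_congruence_diff[where Y = Qf, simplified matrix_mul_rid])
  moreover have "(\<Sum>j<hor p. trace (bdiag (Q j) (R j) ** (S(k := X)) j))
      = (\<Sum>j<hor p. trace (bdiag (Q j) (R j) ** S j)) + trace (bdiag (Q k) (R k) ** (X - S k))"
    using sum_fun_upd[where A = "{..<hor p}" and g = "\<lambda>j M. trace (bdiag (Q j) (R j) ** M)"] assms
    by (simp add: matrix_diff_ldistrib trace_sub)
  ultimately show ?thesis
    by (simp add: qcost_def)
qed

lemma trace_congruence_affine_diff:
  "trace (L ** (G ** X ** transpose G + W) ** transpose L ** P)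
   - trace (L ** (G ** Z ** transpose G + W) ** transpose L ** P)
   = trace ((transpose G ** (transpose L ** P ** L) ** G) ** (X - Z))"
  for L :: "real^'n^'m" and G :: "real^'p^'n"
proof -
  have "L ** (G ** Y ** transpose G + W) ** transpose L ** P
      = (L ** G) ** Y ** transpose (L ** G) ** P + L ** W ** transpose L ** P" for Y
    by (simp add: matrix_add_ldistrib matrix_add_rdistrib matrix_transpose_mul matrix_mul_assoc)
  then show ?thesis
    by (simp add: trace_add trace_congruence_diff) (simp add: matrix_transpose_mul matrix_mul_assoc)
qed

definition Lag_grad_S ::
    "('n::finite, 'm::finite) lqprob \<Rightarrow> real \<Rightarrow> (nat \<Rightarrow> real^'n^'m)
     \<Rightarrow> (nat \<Rightarrow> real^('n + 'm)^('n + 'm)) \<Rightarrow> nat \<Rightarrow> real^('n + 'm)^('n + 'm)" where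
  "Lag_grad_S p lam F P k =
     bdiag (cQ p k + lam *\<^sub>R tQ p k) (cR p k + lam *\<^sub>R tR p k)
     + transpose (sAB p)
       ** (if k = hor p - 1 then cQf p + lam *\<^sub>R tQf p
           else transpose (stackI (F (Suc k))) ** P (Suc k) ** stackI (F (Suc k)))
       ** sAB p
     - P k"

lemma constraint_sum_fun_upd_S:
  assumes k: "k < hor p"
  shows "constraint_sum p (S(k := X)) F P = constraint_sum p S F P
    + (if Suc k < hor p
       then trace ((transpose (sAB p) ** (transpose (stackI (F (Suc k))) ** P (Suc k) ** stackI (F (Suc k)))
                    ** sAB p) ** (X - S k))
       else 0)
    - trace (P k ** (X - S k))"
proof -
  define feedback where
    "feedback S j = trace (stackI (F j) ** state_moment p S j ** transpose (stackI (F j)) ** P j)" for S j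
  have split: "constraint_sum p S' F P = (\<Sum>j<hor p. feedback S' j) - (\<Sum>j<hor p. trace (S' j ** P j))" for S'
    by (simp add: constraint_sum_def feedback_def matrix_diff_rdistrib trace_sub sum_subtractf
        matrix_mul_assoc)
  have "(\<Sum>j<hor p. feedback (S(k := X)) j) = (\<Sum>j<hor p. feedback S j)
      + (if Suc k < hor p then trace (stackI (F (Suc k)) ** (sAB p ** X ** transpose (sAB p) + sW p)
           ** transpose (stackI (F (Suc k))) ** P (Suc k)) - feedback S (Suc k) else 0)"
    unfolding feedback_def state_moment_fun_upd
    using sum_fun_upd[where A = "{..<hor p}" and F = "state_moment p S" and k = "Suc k"
        and G = "sAB p ** X ** transpose (sAB p) + sW p"
        and g = "\<lambda>j M. trace (stackI (F j) ** M ** transpose (stackI (F j)) ** P j)"]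
    by simp
  moreover have "trace (stackI (F (Suc k)) ** (sAB p ** X ** transpose (sAB p) + sW p)
        ** transpose (stackI (F (Suc k))) ** P (Suc k)) - feedback S (Suc k)
      = trace ((transpose (sAB p) ** (transpose (stackI (F (Suc k))) ** P (Suc k) ** stackI (F (Suc k)))
               ** sAB p) ** (X - S k))"
    unfolding feedback_def by (simp add: state_moment_def trace_congruence_affine_diff)
  moreover have "(\<Sum>j<hor p. trace ((S(k := X)) j ** P j))
      = (\<Sum>j<hor p. trace (S j ** P j)) + trace (P k ** (X - S k))"
    using sum_fun_upd[where A = "{..<hor p}" and g = "\<lambda>j M. trace (M ** P j)"] k
    by (simp add: trace_mul_sym[of "P k"] matrix_diff_ldistrib trace_sub)
  ultimately show ?thesis
    unfolding split by simp
qed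

lemma Lag_fun_upd_S:
  assumes N: "1 \<le> hor p" and k: "k < hor p"
  shows "Lag p \<gamma> (S(k := X)) F P lam = Lag p \<gamma> S F P lam + trace (Lag_grad_S p lam F P k ** (X - S k))"
proof -
  define D where "D = X - S k"
  define Y where "Y = transpose (stackI (F (Suc k))) ** P (Suc k) ** stackI (F (Suc k))"
  have "Suc k < hor p \<longleftrightarrow> k \<noteq> hor p - 1"
    using k by auto
  moreover have "trace (Lag_grad_S p lam F P k ** D) =
      trace (bdiag (cQ p k) (cR p k) ** D) + lam * trace (bdiag (tQ p k) (tR p k) ** D)
      + (if k = hor p - 1
         then trace ((transpose (sAB p) ** cQf p ** sAB p) ** D)
              + lam * trace ((transpose (sAB p) ** tQf p ** sAB p) ** D)
         else trace ((transpose (sAB p) ** Y ** sAB p) ** D))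
      - trace (P k ** D)"
    by (simp add: Lag_grad_S_def Y_def bdiag_add bdiag_scaleR matrix_add_ldistrib matrix_add_rdistrib
        matrix_diff_rdistrib trace_add trace_sub matrix_scalar_ac scalar_matrix_assoc[symmetric]
        trace_scaleR)
  ultimately show ?thesis
    unfolding Lag_eq_constraint_sum[OF N] Jp_def Cc_def qcost_fun_upd[OF k] constraint_sum_fun_upd_S[OF k]
      D_def[symmetric] Y_def[symmetric]
    by (cases "k = hor p - 1") (simp_all add: algebra_simps)
qed

lemma Lag_fun_upd_F:
  assumes N: "1 \<le> hor p" and k: "k < hor p"
  shows "Lag p \<gamma> S (F(k := G)) P lam = Lag p \<gamma> S F P lam
    + trace (stackI G ** state_moment p S k ** transpose (stackI G) ** P k)
    - trace (stackI (F k) ** state_moment p S k ** transpose (stackI (F k)) ** P k)"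
  using sum_fun_upd[where A = "{..<hor p}" and F = F and k = k and G = G
      and g = "\<lambda>j H. trace ((stackI H ** state_moment p S j ** transpose (stackI H) - S j) ** P j)"] k
  unfolding Lag_eq_constraint_sum[OF N] constraint_sum_def by (simp add: matrix_diff_rdistrib trace_sub)

section \<open>Stationarity\<close>

lemma trace_stackI_congruence_add:
  fixes P :: "real^('n::finite + 'm::finite)^('n + 'm)" and M :: "real^'n^'n"
  assumes sM: "transpose M = M" and sP: "transpose P = P"
  shows "trace (stackI (F + H) ** M ** transpose (stackI (F + H)) ** P) =
     trace (stackI F ** M ** transpose (stackI F) ** P)
     + 2 * trace (H ** (M ** transpose (stackI F) ** P ** inr_mat))
     + trace (H ** M ** transpose H ** (transpose inr_mat ** P ** inr_mat))"
proof -
  define L where "L = stackI F"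
  have "stackI (F + H) = L + inr_mat ** H"
    unfolding L_def stackI_eq by (simp add: matrix_add_ldistrib)
  then have "stackI (F + H) ** M ** transpose (stackI (F + H)) ** P =
     L ** M ** transpose L ** P + L ** M ** transpose H ** transpose inr_mat ** P
     + inr_mat ** H ** M ** transpose L ** P + inr_mat ** H ** M ** transpose H ** transpose inr_mat ** P"
    by (simp add: transpose_add matrix_transpose_mul matrix_add_ldistrib matrix_add_rdistrib
        matrix_mul_assoc add_ac)
  moreover have "trace (L ** M ** transpose H ** transpose inr_mat ** P)
      = trace (H ** (M ** transpose L ** P ** inr_mat))"
  proof -
    have "trace (L ** M ** transpose H ** transpose inr_mat ** P)
        = trace (transpose (L ** M ** transpose H ** transpose inr_mat ** P))"
      by (simp add: trace_transpose)
    also have "\<dots> = trace ((P ** inr_mat) ** (H ** M ** transpose L))"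
      by (simp add: matrix_transpose_mul sM sP matrix_mul_assoc)
    also have "\<dots> = trace ((H ** M ** transpose L) ** (P ** inr_mat))"
      by (rule trace_mul_sym)
    finally show ?thesis by (simp add: matrix_mul_assoc)
  qed
  moreover have "trace (inr_mat ** H ** M ** transpose L ** P) = trace (H ** (M ** transpose L ** P ** inr_mat))"
    using trace_mul_sym[of inr_mat "H ** M ** transpose L ** P"] by (simp add: matrix_mul_assoc)
  moreover have "trace (inr_mat ** H ** M ** transpose H ** transpose inr_mat ** P)
      = trace (H ** M ** transpose H ** (transpose inr_mat ** P ** inr_mat))"
    using trace_mul_sym[of inr_mat "H ** M ** transpose H ** transpose inr_mat ** P"]
    by (simp add: matrix_mul_assoc)
  ultimately show ?thesis
    unfolding L_def by (simp add: trace_add)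
qed

lemma bilinear_trace_congruence:
  "bilinear (\<lambda>U V. trace (U ** (M::real^'n^'n) ** transpose V ** (R::real^'m^'m)))"
  unfolding bilinear_def linear_iff
  by (simp add: matrix_add_rdistrib matrix_add_ldistrib transpose_add trace_add transpose_scalar
      scalar_matrix_assoc[symmetric] matrix_scalar_ac trace_scaleR)

lemma psd_if_dyn_ok:
  assumes V: "pd (sV p)" and W: "pd (sW p)" and dyn: "dyn_ok p S F"
  shows "k < hor p \<Longrightarrow> psd (S k)"
proof (induction k)
  case 0
  then show ?case
    using dyn psd_congruence[OF psd_add[OF pd_imp_psd[OF V] psd_outer], of "transpose (stackI (F 0))"]
    by (simp add: dyn_ok_def S0of_def)
next
  case (Suc k)
  then have "psd (sAB p ** S k ** transpose (sAB p) + sW p)"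
    using psd_congruence[of "S k" "transpose (sAB p)"] by (simp add: psd_add pd_imp_psd W)
  then show ?case
    using Suc.prems dyn psd_congruence[of _ "transpose (stackI (F (Suc k)))"]
    by (simp add: dyn_ok_def Phi_def)
qed

lemma pd_state_moment:
  assumes V: "pd (sV p)" and W: "pd (sW p)" and dyn: "dyn_ok p S F" and k: "k < hor p"
  shows "pd (state_moment p S k)"
proof (cases k)
  case 0
  then show ?thesis by (simp add: state_moment_def pd_add_psd V psd_outer)
next
  case (Suc j)
  then have "psd (S j)"
    using psd_if_dyn_ok[OF V W dyn] k by simp
  then have "pd (sW p + sAB p ** S j ** transpose (sAB p))"
    using pd_add_psd[OF W] psd_congruence[of "S j" "transpose (sAB p)"] by simp
  then show ?thesis by (simp add: Suc state_moment_def add.commute)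
qed

lemma Lag_stationary_S_iff:
  assumes N: "1 \<le> hor p" and k: "k < hor p"
    and sym_S: "symm (S k)" and sym_grad: "symm (Lag_grad_S p lam F P k)"
  shows "((\<lambda>X. Lag p \<gamma> (S(k := X)) F P lam) has_derivative (\<lambda>_. 0)) (at (S k) within {X. symm X})
    \<longleftrightarrow> Lag_grad_S p lam F P k = 0"
proof
  define h where "h = Lag_grad_S p lam F P k"
  assume "((\<lambda>X. Lag p \<gamma> (S(k := X)) F P lam) has_derivative (\<lambda>_. 0)) (at (S k) within {X. symm X})"
  then have "trace (h ** h) = 0"
  proof (rule has_derivative_zero_imp_line_coeff_zero)
    fix t :: real
    show "S k + t *\<^sub>R h \<in> {X. symm X}"
      using sym_S sym_grad by (simp add: symm_def h_def transpose_add transpose_scalar)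
    show "Lag p \<gamma> (S(k := S k + t *\<^sub>R h)) F P lam = Lag p \<gamma> (S(k := S k)) F P lam + t * trace (h ** h) + t * t * 0"
      unfolding Lag_fun_upd_S[OF N k] h_def by (simp add: matrix_scalar_ac trace_scaleR_mult)
  qed
  then have "trace (transpose h ** h) = 0"
    using sym_grad by (simp add: h_def symm_def)
  then show "Lag_grad_S p lam F P k = 0"
    unfolding h_def by (rule trace_transpose_mult_self_eq_0)
next
  assume "Lag_grad_S p lam F P k = 0"
  then have "(\<lambda>X. Lag p \<gamma> (S(k := X)) F P lam) = (\<lambda>_. Lag p \<gamma> S F P lam)"
    by (simp add: Lag_fun_upd_S[OF N k])
  then show "((\<lambda>X. Lag p \<gamma> (S(k := X)) F P lam) has_derivative (\<lambda>_. 0)) (at (S k) within {X. symm X})"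
    by simp
qed

lemma Lag_stationary_F_iff:
  assumes N: "1 \<le> hor p" and k: "k < hor p"
    and M: "pd (state_moment p S k)" and sym_P: "symm (P k)"
  shows "((\<lambda>G. Lag p \<gamma> S (F(k := G)) P lam) has_derivative (\<lambda>_. 0)) (at (F k))
    \<longleftrightarrow> transpose inr_mat ** P k ** stackI (F k) = 0"
proof -
  define Mk where "Mk = state_moment p S k"
  define K where "K = Mk ** transpose (stackI (F k)) ** P k ** inr_mat"
  define P22 where "P22 = transpose inr_mat ** P k ** inr_mat"
  have sM: "transpose Mk = Mk" and iM: "invertible Mk"
    using M pd_imp_invertible unfolding Mk_def pd_def by blast+
  have sP: "transpose (P k) = P k"
    using sym_P by (simp add: symm_def)
  have expand: "Lag p \<gamma> S (F(k := F k + H)) P lam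
      = Lag p \<gamma> S (F(k := F k)) P lam + 2 * trace (H ** K) + trace (H ** Mk ** transpose H ** P22)" for H
    unfolding Lag_fun_upd_F[OF N k] Mk_def[symmetric]
    using trace_stackI_congruence_add[OF sM sP] by (simp add: K_def P22_def)
  have "K = 0 \<longleftrightarrow> transpose K = 0"
    by (metis transpose_iff transpose_zero)
  also have "\<dots> \<longleftrightarrow> transpose inr_mat ** P k ** stackI (F k) ** Mk = 0"
    by (simp add: K_def matrix_transpose_mul sM sP matrix_mul_assoc)
  finally have K0: "K = 0 \<longleftrightarrow> transpose inr_mat ** P k ** stackI (F k) = 0"
    by (simp add: matrix_mult_invertible_eq_0_iff[OF iM])
  show ?thesis
  proof
    assume stat: "((\<lambda>G. Lag p \<gamma> S (F(k := G)) P lam) has_derivative (\<lambda>_. 0)) (at (F k))"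
    have "2 * trace (H ** K) = 0" for H
      by (rule has_derivative_zero_imp_line_coeff_zero[OF stat,
            where h = H and c = "trace (H ** Mk ** transpose H ** P22)"])
         (simp_all add: expand trace_scaleR_mult trace_congruence_scaleR mult.left_commute)
    then have "K = 0"
      by (intro trace_mult_orthogonal_eq_0) simp
    then show "transpose inr_mat ** P k ** stackI (F k) = 0"
      using K0 by simp
  next
    assume "transpose inr_mat ** P k ** stackI (F k) = 0"
    then have "Lag p \<gamma> S (F(k := G)) P lam = Lag p \<gamma> S (F(k := F k)) P lam
        + trace ((G - F k) ** Mk ** transpose (G - F k) ** P22)" for G
      using K0 expand[of "G - F k"] by simp
    then show "((\<lambda>G. Lag p \<gamma> S (F(k := G)) P lam) has_derivative (\<lambda>_. 0)) (at (F k))"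
      by (intro has_derivative_zero_if_bilinear_remainder[OF bilinear_trace_congruence])
  qed
qed

lemma Lag_grad_S_eq_Plam_diff:
  assumes adm: "weights_admissible p" and lam: "0 \<le> lam" and k: "k < hor p"
    and next_stage: "Suc k < hor p \<Longrightarrow> F (Suc k) = Flam p lam (Suc k) \<and> P (Suc k) = Plam p lam (Suc k)"
  shows "Lag_grad_S p lam F P k = Plam p lam k - P k"
proof -
  have "(if k = hor p - 1 then cQf p + lam *\<^sub>R tQf p
         else transpose (stackI (F (Suc k))) ** P (Suc k) ** stackI (F (Suc k)))
        = Xlam p lam (Suc k)"
  proof (cases "k = hor p - 1")
    case True
    then show ?thesis using k by (simp add: Xlam_def)
  next
    case False
    then have "Suc k < hor p" using k by simp
    with False show ?thesis
      using next_stage Xlam_eq_stackI_congruence[OF adm lam _ psd_Xlam[OF adm lam]] by simp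
  qed
  then show ?thesis
    unfolding Lag_grad_S_def Plam_eq by simp
qed

definition stationary_at ::
    "('n::finite, 'm::finite) lqprob \<Rightarrow> real \<Rightarrow> (nat \<Rightarrow> real^('n + 'm)^('n + 'm)) \<Rightarrow> (nat \<Rightarrow> real^'n^'m)
     \<Rightarrow> (nat \<Rightarrow> real^('n + 'm)^('n + 'm)) \<Rightarrow> real \<Rightarrow> nat \<Rightarrow> bool" where
  "stationary_at p \<gamma> S F P lam k \<longleftrightarrow>
     ((\<lambda>X. Lag p \<gamma> (S(k := X)) F P lam) has_derivative (\<lambda>_. 0)) (at (S k) within {X. symm X})
   \<and> ((\<lambda>G. Lag p \<gamma> S (F(k := G)) P lam) has_derivative (\<lambda>_. 0)) (at (F k))"

lemma stationary_iff_stationary_at: "stationary p \<gamma> S F P lam \<longleftrightarrow> (\<forall>k<hor p. stationary_at p \<gamma> S F P lam k)"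
  unfolding stationary_def stationary_at_def ..

lemma stationary_at_iff_riccati:
  assumes adm: "weights_admissible p" and lam: "0 \<le> lam" and N: "1 \<le> hor p" and k: "k < hor p"
    and V: "pd (sV p)" and W: "pd (sW p)" and dyn: "dyn_ok p S F" and sym_P: "symm (P k)"
    and next_stage: "Suc k < hor p \<Longrightarrow> F (Suc k) = Flam p lam (Suc k) \<and> P (Suc k) = Plam p lam (Suc k)"
  shows "stationary_at p \<gamma> S F P lam k \<longleftrightarrow> F k = Flam p lam k \<and> P k = Plam p lam k"
proof -
  have grad: "Lag_grad_S p lam F P k = Plam p lam k - P k"
    using Lag_grad_S_eq_Plam_diff[OF adm lam k] next_stage by blast
  have "symm (S k)"
    using psd_if_dyn_ok[OF V W dyn k] by (simp add: psd_def symm_def)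
  moreover have "symm (Lag_grad_S p lam F P k)"
    using psd_Plam[OF adm lam k] sym_P by (simp add: grad psd_def symm_def transpose_diff)
  ultimately have "((\<lambda>X. Lag p \<gamma> (S(k := X)) F P lam) has_derivative (\<lambda>_. 0)) (at (S k) within {X. symm X})
      \<longleftrightarrow> P k = Plam p lam k"
    using Lag_stationary_S_iff[OF N k] grad by auto
  moreover have "((\<lambda>G. Lag p \<gamma> S (F(k := G)) P lam) has_derivative (\<lambda>_. 0)) (at (F k))
      \<longleftrightarrow> F k = Flam p lam k" if P_k: "P k = Plam p lam k"
  proof -
    have "((\<lambda>G. Lag p \<gamma> S (F(k := G)) P lam) has_derivative (\<lambda>_. 0)) (at (F k))
        \<longleftrightarrow> transpose inr_mat ** Plam p lam k ** stackI (F k) = 0"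
      unfolding P_k[symmetric]
      by (rule Lag_stationary_F_iff[where P = P and F = F and \<gamma> = \<gamma> and lam = lam,
            OF N k pd_state_moment[OF V W dyn k] sym_P])
    also have "\<dots> \<longleftrightarrow> F k = Flam p lam k"
      unfolding inr_stackI_eq_0_iff[OF invertible_Plam_inr_inr[OF adm lam k]] Flam_eq_optimal_gain ..
    finally show ?thesis .
  qed
  ultimately show ?thesis
    unfolding stationary_at_def by blast
qed

lemma stationary_iff_riccati:
  assumes adm: "weights_admissible p" and lam: "0 \<le> lam" and N: "1 \<le> hor p"
    and V: "pd (sV p)" and W: "pd (sW p)" and dyn: "dyn_ok p S F" and sym_P: "\<forall>k<hor p. symm (P k)"
  shows "stationary p \<gamma> S F P lam \<longleftrightarrow> (\<forall>k<hor p. F k = Flam p lam k \<and> P k = Plam p lam k)"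
proof
  assume stat: "stationary p \<gamma> S F P lam"
  have "k < hor p \<longrightarrow> F k = Flam p lam k \<and> P k = Plam p lam k" if "k \<le> hor p" for k
    using that
  proof (induction k rule: inc_induct)
    case (step k)
    then show ?case
      using stat sym_P stationary_at_iff_riccati[where P = P and \<gamma> = \<gamma>, OF adm lam N _ V W dyn]
      unfolding stationary_iff_stationary_at by blast
  qed simp
  then show "\<forall>k<hor p. F k = Flam p lam k \<and> P k = Plam p lam k"
    by simp
next
  assume "\<forall>k<hor p. F k = Flam p lam k \<and> P k = Plam p lam k"
  then show "stationary p \<gamma> S F P lam"
    using sym_P stationary_at_iff_riccati[where P = P and \<gamma> = \<gamma>, OF adm lam N _ V W dyn]
    unfolding stationary_iff_stationary_at by simp
qed

section \<open>The KKT points\<close>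

lemma dyn_ok_Flam_iff:
  assumes N: "1 \<le> hor p" and F: "\<forall>k<hor p. F k = Flam p lam k"
  shows "dyn_ok p S F \<longleftrightarrow> (\<forall>k<hor p. S k = Slam p lam k)"
proof
  assume dyn: "dyn_ok p S F"
  show "\<forall>k<hor p. S k = Slam p lam k"
  proof (intro allI impI)
    show "k < hor p \<Longrightarrow> S k = Slam p lam k" for k
      by (induction k) (use dyn F in \<open>simp_all add: dyn_ok_def\<close>)
  qed
next
  assume S: "\<forall>k<hor p. S k = Slam p lam k"
  show "dyn_ok p S F"
    unfolding dyn_ok_def
  proof (intro conjI allI impI)
    show "S 0 = S0of p (F 0)" using N S F by simp
    show "S k = Phi p (F k) (S (k - 1))" if "1 \<le> k \<and> k < hor p" for k
      using that S F by (cases k) auto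
  qed
qed

lemma Cc_cong:
  assumes "1 \<le> hor p" and "\<forall>k<hor p. S k = S' k"
  shows "Cc p S = Cc p S'"
  using assms unfolding Cc_def qcost_def by simp

lemma KKT_iff_riccati:
  assumes adm: "weights_admissible p" and N: "1 \<le> hor p" and V: "pd (sV p)" and W: "pd (sW p)"
  shows "KKT p \<gamma> lam S F P \<longleftrightarrow>
    0 \<le> lam \<and> Cc p (Slam p lam) \<le> \<gamma> \<and> lam * (Cc p (Slam p lam) - \<gamma>) = 0
    \<and> (\<forall>k<hor p. S k = Slam p lam k \<and> F k = Flam p lam k \<and> P k = Plam p lam k)"
proof
  assume kkt: "KKT p \<gamma> lam S F P"
  then have lam: "0 \<le> lam" and dyn: "dyn_ok p S F" and sym_P: "\<forall>k<hor p. symm (P k)"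
    and slack: "Cc p S \<le> \<gamma> \<and> lam * (Cc p S - \<gamma>) = 0" and stat: "stationary p \<gamma> S F P lam"
    by (simp_all add: KKT_def)
  have FP: "\<forall>k<hor p. F k = Flam p lam k \<and> P k = Plam p lam k"
    using stat stationary_iff_riccati[OF adm lam N V W dyn sym_P] by blast
  then have S: "\<forall>k<hor p. S k = Slam p lam k"
    using dyn dyn_ok_Flam_iff[OF N] by blast
  then have "Cc p S = Cc p (Slam p lam)"
    by (rule Cc_cong[OF N])
  with lam slack FP S show "0 \<le> lam \<and> Cc p (Slam p lam) \<le> \<gamma> \<and> lam * (Cc p (Slam p lam) - \<gamma>) = 0
    \<and> (\<forall>k<hor p. S k = Slam p lam k \<and> F k = Flam p lam k \<and> P k = Plam p lam k)"
    by simp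
next
  assume H: "0 \<le> lam \<and> Cc p (Slam p lam) \<le> \<gamma> \<and> lam * (Cc p (Slam p lam) - \<gamma>) = 0
    \<and> (\<forall>k<hor p. S k = Slam p lam k \<and> F k = Flam p lam k \<and> P k = Plam p lam k)"
  then have lam: "0 \<le> lam" and FP: "\<forall>k<hor p. F k = Flam p lam k \<and> P k = Plam p lam k"
    and S: "\<forall>k<hor p. S k = Slam p lam k"
    by simp_all
  have "Cc p S = Cc p (Slam p lam)"
    using S by (rule Cc_cong[OF N])
  with H have slack: "Cc p S \<le> \<gamma> \<and> lam * (Cc p S - \<gamma>) = 0"
    by simp
  have dyn: "dyn_ok p S F"
    using dyn_ok_Flam_iff[OF N] FP S by blast
  have sym_P: "\<forall>k<hor p. symm (P k)"
    using FP psd_Plam[OF adm lam] by (simp add: psd_def symm_def)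
  have "stationary p \<gamma> S F P lam"
    using FP stationary_iff_riccati[OF adm lam N V W dyn sym_P] by blast
  with lam dyn sym_P slack show "KKT p \<gamma> lam S F P"
    by (simp add: KKT_def)
qed

theorem proposition4:
  fixes p :: "('n::finite, 'm::finite) lqprob" and \<gamma> :: real
  assumes N: "1 \<le> hor p"
    and Qf: "psd (cQf p)" and tQf: "psd (tQf p)"
    and Q: "\<forall>k<hor p. psd (cQ p k)" and tQ: "\<forall>k<hor p. psd (tQ p k)"
    and R: "\<forall>lam\<ge>0. \<forall>k<hor p. pd (cR p k + lam *\<^sub>R tR p k)"
    and V: "pd (sV p)" and W: "pd (sW p)"
    and strict: "\<exists>S F. dyn_ok p S F \<and> Cc p S < \<gamma>"
    and nontriv: "Cc p (Slam p 0) > \<gamma>"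
  shows "{(lam, S, F, P). KKT p \<gamma> lam S F P}
       = {(lam, S, F, P). 0 < lam \<and> Cc p (Slam p lam) = \<gamma>
            \<and> (\<forall>k<hor p. S k = Slam p lam k \<and> F k = Flam p lam k \<and> P k = Plam p lam k)}"
proof -
  have adm: "weights_admissible p"
    using Qf tQf Q tQ R by (simp add: weights_admissible_def)
  have slackness: "0 \<le> lam \<and> Cc p (Slam p lam) \<le> \<gamma> \<and> lam * (Cc p (Slam p lam) - \<gamma>) = 0 \<and> X
      \<longleftrightarrow> 0 < lam \<and> Cc p (Slam p lam) = \<gamma> \<and> X" for lam X
    using nontriv by (cases "lam = 0") auto
  show ?thesis
    by (simp only: KKT_iff_riccati[OF adm N V W] slackness)
qed

end
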